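(* Let $N\geq 1$ be an integer. Then for all $0<|x|<\pi/2$, \[ a_N x^{2N+2}<2\left(\frac{x}{\sin x}\right)+\frac{x}{\tan x}-\left(3+\sum_{j=2}^{N}\frac{(2^{2j}-4)|B_{2j}|}{(2j)!}x^{2j}\right)<b_N x^{2N+2}, \] with the best possible constants \[ a_N=\frac{(2^{2N+2}-4)|B_{2N+2}|}{(2N+2)!}, \] \[ b_N=\frac{8}{\pi^{2N+2}}\left(\sum_{k=1}^{\infty}\frac{(-1)^{k+1}}{k^{2N}(2k-1)}-\sum_{k=1}^{\infty}\frac{(-1)^{k+1}}{k^{2N}(2k+1)}\right)-\frac{4}{\pi^{2N+2}}\left(\sum_{k=1}^{\infty}\frac{1}{k^{2N}(2k-1)}-\sum_{k=1}^{\infty}\frac{1}{k^{2N}(2k+1)}\right). \]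
   Context: The Bernoulli numbers $B_n$ are defined by $\frac{t}{e^t-1}=\sum_{n=0}^\infty B_n\frac{t^n}{n!}$ for $|t|<2\pi$. An empty sum is understood to be zero. *)

theory Defs
  imports "HOL-Analysis.Analysis"
begin

text \<open>Bernoulli numbers, defined (as in the paper) by the generating function
  t/(e^t - 1) = sum_n B_n t^n / n!  for 0 < |t| < 2 pi
  (the point t = 0 is excluded since the left side is a removable singularity there).\<close>
definition bernoulli_num :: "nat \<Rightarrow> real" where
  "bernoulli_num = (THE B. \<forall>t::real. 0 < \<bar>t\<bar> \<and> \<bar>t\<bar> < 2 * pi \<longrightarrow>
       (\<lambda>n. B n * t ^ n / fact n) sums (t / (exp t - 1)))"

end

theory Submission
  imports Defs
begin

text \<open>
  The reflection formula for the digamma function gives the partial fraction expansion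
  \<open>x cot x = 1 + (\<Sum>m\<ge>1. 2x\<^sup>2 / (x\<^sup>2 - m\<^sup>2\<pi>\<^sup>2))\<close>; the same expansion at imaginary arguments
  yields Euler's formula \<open>|B(2j)| = 2 (2j)! \<zeta>(2j) / (2\<pi>)^(2j)\<close>. Since
  \<open>2x/sin x + x/tan x = 4 (x/2) cot (x/2) - x cot x\<close>, the function of the theorem is a series over
  \<open>m\<close>. Expanding its \<open>m\<close>-th term geometrically in \<open>u = (x/(m\<pi>))\<^sup>2\<close>, the part of degree at
  most \<open>2N\<close> is exactly the subtracted polynomial, and what remains is \<open>2 u^(N+1) \<psi>(u)\<close> with
  \<open>\<psi>(u) = 1/(1 - u) - 4^(-N)/(1 - u/4)\<close>. So the function equals \<open>x^(2N+2) \<Psi>((x/\<pi>)\<^sup>2)\<close>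
  with \<open>\<Psi>(v) = (\<Sum>m\<ge>1. 2 \<psi>(v/m\<^sup>2) / (m\<pi>)^(2N+2))\<close>. As \<open>\<psi>\<close> is strictly increasing on
  \<open>[0, 1/4]\<close>, so is \<open>\<Psi>\<close>, and the best constants are \<open>a\<^sub>N = \<Psi>(0)\<close> and \<open>b\<^sub>N = \<Psi>(1/4)\<close>,
  the values at the ends of the range of \<open>(x/\<pi>)\<^sup>2\<close>.
\<close>

section \<open>Partial fractions for the cotangent\<close>

lemma pi_cot_eq_Digamma_diff:
  fixes z :: complex
  assumes z: "z \<notin> \<int>"
  shows "of_real pi * cot (of_real pi * z) = Digamma (1 - z) - Digamma z"
proof -
  have z_Gamma: "z \<notin> \<int>\<^sub>\<le>\<^sub>0" "1 - z \<notin> \<int>\<^sub>\<le>\<^sub>0"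
    using z Ints_diff[of 1 "1 - z"] nonpos_Ints_subset_Ints by auto
  have sin_nz: "sin (of_real pi * z) \<noteq> 0"
  proof
    assume "sin (of_real pi * z) = 0"
    then obtain n :: int where "of_real pi * z = of_real (of_int n * pi)" by (auto simp: sin_eq_0)
    hence "z = of_int n" by (simp add: field_simps)
    thus False using z by auto
  qed
  \<comment> \<open>differentiate the reflection formula \<open>\<Gamma>(w) \<Gamma>(1 - w) = \<pi> / sin (\<pi> w)\<close> logarithmically\<close>
  have "((\<lambda>w. Gamma w * Gamma (1 - w)) has_field_derivative
          Gamma z * Gamma (1 - z) * (Digamma z - Digamma (1 - z))) (at z)"
    using z_Gamma by (auto intro!: derivative_eq_intros simp: algebra_simps)
  moreover have "((\<lambda>w. Gamma w * Gamma (1 - w)) has_field_derivative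
          of_real pi / sin (of_real pi * z) * (- of_real pi * cot (of_real pi * z))) (at z)"
    unfolding Gamma_reflection_complex using sin_nz
    by (auto intro!: derivative_eq_intros simp: cot_def power2_eq_square field_simps)
  ultimately have "Gamma z * Gamma (1 - z) * (Digamma z - Digamma (1 - z))
      = Gamma z * Gamma (1 - z) * (- of_real pi * cot (of_real pi * z))"
    unfolding Gamma_reflection_complex by (rule DERIV_unique)
  moreover have "Gamma z * Gamma (1 - z) \<noteq> 0"
    using sin_nz by (simp add: Gamma_reflection_complex)
  ultimately have "Digamma z - Digamma (1 - z) = - of_real pi * cot (of_real pi * z)"
    by (rule mult_left_cancel[THEN iffD1, rotated])
  thus ?thesis by (simp add: algebra_simps)
qed

lemma pi_cot_partial_fractions:
  fixes z :: complex
  assumes z: "z \<notin> \<int>"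
  shows "(\<lambda>m. 2 * z / (z^2 - (of_nat (Suc m))^2)) sums (of_real pi * cot (of_real pi * z) - 1 / z)"
proof -
  have nz: "z + of_nat k \<noteq> 0" "1 - z + of_nat k \<noteq> 0" for k :: nat
  proof -
    show "z + of_nat k \<noteq> 0"
      using z by (metis Ints_minus Ints_of_nat add.commute add_eq_0_iff2 minus_equation_iff)
    show "1 - z + of_nat k \<noteq> 0"
      using z by (metis Ints_of_nat add.commute add_diff_eq eq_iff_diff_eq_0 of_nat_Suc)
  qed
  have "(\<lambda>k. inverse (z + of_nat k) - inverse (1 - z + of_nat k)) sums (Digamma (1 - z) - Digamma z)"
    using sums_diff[OF summable_Digamma[OF nz(2)[of 0], THEN summable_sums]
                       summable_Digamma[OF nz(1)[of 0], THEN summable_sums]]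
    by (simp add: Digamma_def)
  moreover have "(\<lambda>k. inverse (z + of_nat k) - inverse (z + of_nat (Suc k))) sums inverse z"
    using telescope_sums'[OF filterlim_compose[OF tendsto_inverse_0
          tendsto_add_filterlim_at_infinity[OF tendsto_const tendsto_of_nat]], of z]
    by simp
  ultimately have "(\<lambda>k. inverse (z + of_nat (Suc k)) - inverse (1 - z + of_nat k))
      sums (Digamma (1 - z) - Digamma z - inverse z)"
    by (auto dest: sums_diff)
  moreover have "inverse (z + of_nat (Suc k)) - inverse (1 - z + of_nat k)
      = 2 * z / (z^2 - (of_nat (Suc k))^2)" for k
  proof -
    have "z^2 - (of_nat (Suc k))^2 = - ((z + of_nat (Suc k)) * (1 - z + of_nat k))"
      by (simp add: algebra_simps power2_eq_square)
    with nz(1)[of "Suc k"] nz(2)[of k] show ?thesis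
      by (simp add: divide_simps)
  qed
  ultimately show ?thesis
    by (simp add: pi_cot_eq_Digamma_diff[OF z] divide_inverse)
qed

lemma cot_partial_fractions:
  fixes x :: real
  assumes x: "x \<noteq> 0" "\<bar>x\<bar> < pi"
  shows "(\<lambda>m. 2 * x^2 / (x^2 - (real (Suc m) * pi)^2)) sums (x * cot x - 1)"
proof -
  define z where "z = complex_of_real (x / pi)"
  have "z \<notin> \<int>"
  proof
    assume "z \<in> \<int>"
    then obtain i :: int where i: "x / pi = of_int i" by (auto simp: complex_is_Int_iff z_def)
    moreover have "\<bar>x / pi\<bar> < 1" using x(2) by (simp add: abs_divide)
    ultimately have "i = 0" by simp
    thus False using i x(1) by simp
  qed
  have "(\<lambda>m. z * (2 * z / (z^2 - (of_nat (Suc m))^2))) sums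
        (z * (of_real pi * cot (of_real pi * z) - 1 / z))"
    by (rule sums_mult[OF pi_cot_partial_fractions[OF \<open>z \<notin> \<int>\<close>]])
  also have "z * (of_real pi * cot (of_real pi * z) - 1 / z) = of_real (x * cot x - 1)"
    using x(1) by (simp add: z_def right_diff_distrib cot_of_real)
  also have "(\<lambda>m. z * (2 * z / (z^2 - (of_nat (Suc m))^2)))
      = (\<lambda>m. of_real (2 * x^2 / (x^2 - (real (Suc m) * pi)^2)))"
    by (simp add: z_def field_simps power2_eq_square)
  finally show ?thesis by (simp only: sums_of_real_iff)
qed

lemma i_times_cot_i_times:
  fixes w :: real
  assumes "w \<noteq> 0"
  shows "\<i> * of_real w * cot (\<i> * of_real w) = of_real (w * (exp (2 * w) + 1) / (exp (2 * w) - 1))"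
proof -
  define e where "e = exp w"
  have e: "e > 0" "e * e \<noteq> 1" using assms by (simp_all add: e_def flip: exp_add)
  have cos: "cos (\<i> * of_real w) = of_real ((e + inverse e) / 2)"
    by (simp add: cos_i_times exp_of_real e_def)
  have sin: "sin (\<i> * of_real w) = \<i> * of_real ((e - inverse e) / 2)"
    by (simp add: sin_i_times exp_of_real e_def)
  have "e - inverse e \<noteq> 0" using e by (simp add: field_simps)
  hence "\<i> * of_real w * cot (\<i> * of_real w)
      = of_real (w * ((e + inverse e) / 2) / ((e - inverse e) / 2))"
    unfolding cot_def cos sin by (simp del: of_real_diff of_real_add)
  also have "w * ((e + inverse e) / 2) / ((e - inverse e) / 2) = w * (e * e + 1) / (e * e - 1)"
    using e by (simp add: field_simps)
  finally show ?thesis by (simp add: e_def flip: exp_add)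
qed

lemma exp_partial_fractions:
  fixes t :: real
  assumes t: "t \<noteq> 0"
  shows "(\<lambda>m. 2 * (t / (2*pi))^2 / ((t / (2*pi))^2 + (real (Suc m))^2))
           sums (t / (exp t - 1) - 1 + t / 2)"
proof -
  define s where "s = t / (2*pi)"
  define z where "z = \<i> * complex_of_real s"
  have "z \<notin> \<int>" using t by (auto simp: complex_is_Int_iff z_def s_def)
  have "(\<lambda>m. z * (2 * z / (z^2 - (of_nat (Suc m))^2))) sums
        (z * (of_real pi * cot (of_real pi * z) - 1 / z))"
    by (rule sums_mult[OF pi_cot_partial_fractions[OF \<open>z \<notin> \<int>\<close>]])
  also have "z * (of_real pi * cot (of_real pi * z) - 1 / z)
      = \<i> * of_real (t/2) * cot (\<i> * of_real (t/2)) - 1"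
    using t by (simp add: z_def s_def field_simps)
  also have "\<dots> = of_real (t / (exp t - 1) - 1 + t / 2)"
  proof -
    have "exp t \<noteq> 1" using t by simp
    thus ?thesis using i_times_cot_i_times[of "t/2"] t by (simp add: field_simps)
  qed
  also have "(\<lambda>m. z * (2 * z / (z^2 - (of_nat (Suc m))^2)))
      = (\<lambda>m. of_real (2 * s^2 / (s^2 + (real (Suc m))^2)))"
  proof
    fix m
    have "z * (2 * z / (z^2 - (of_nat (Suc m))^2))
        = (- (2 * (of_real s)^2)) / (- ((of_real s)^2 + (of_nat (Suc m))^2))"
      by (simp add: z_def power2_eq_square algebra_simps)
    also have "\<dots> = of_real (2 * s^2 / (s^2 + (real (Suc m))^2))"
      unfolding minus_divide_divide by simp
    finally show "z * (2 * z / (z^2 - (of_nat (Suc m))^2)) = of_real (2 * s^2 / (s^2 + (real (Suc m))^2))" .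
  qed
  finally show ?thesis by (simp only: sums_of_real_iff s_def)
qed

section \<open>Bernoulli numbers and the zeta function\<close>

lemma has_sum_suminf_abs:
  fixes f :: "nat \<Rightarrow> real"
  assumes "summable (\<lambda>n. \<bar>f n\<bar>)"
  shows "(f has_sum (\<Sum>n. f n)) UNIV"
proof (rule norm_summable_imp_has_sum)
  show "summable (\<lambda>n. norm (f n))" using assms by simp
  show "f sums (\<Sum>n. f n)" using assms by (rule summable_sums[OF summable_rabs_cancel])
qed

lemma summable_on_double_series:
  fixes g :: "nat \<Rightarrow> nat \<Rightarrow> real"
  assumes rows: "\<And>m. summable (\<lambda>n. \<bar>g m n\<bar>)"
    and total: "summable (\<lambda>m. \<Sum>n. \<bar>g m n\<bar>)"
  shows "(\<lambda>(m, n). g m n) summable_on UNIV \<times> UNIV"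
proof -
  have row_sum: "((\<lambda>n. \<bar>g m n\<bar>) has_sum (\<Sum>n. \<bar>g m n\<bar>)) UNIV" for m
    using has_sum_suminf_abs[of "\<lambda>n. \<bar>g m n\<bar>"] rows[of m] by simp
  have "(\<lambda>m. \<bar>\<Sum>n. \<bar>g m n\<bar>\<bar>) summable_on UNIV"
    using has_sum_suminf_abs[of "\<lambda>m. \<Sum>n. \<bar>g m n\<bar>"] total
    by (auto simp: suminf_nonneg[OF rows] intro: has_sum_imp_summable)
  moreover have "infsum (\<lambda>n. \<bar>g m n\<bar>) UNIV = (\<Sum>n. \<bar>g m n\<bar>)" for m
    using row_sum by (rule infsumI)
  ultimately have "(\<lambda>x. norm ((\<lambda>(m, n). g m n) x)) summable_on UNIV \<times> UNIV"
  proof (intro Infinite_Sum.abs_summable_on_Sigma_iff[where f = "\<lambda>(m, n). g m n", THEN iffD2] conjI ballI)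
    show "(\<lambda>n. norm ((\<lambda>(m, n). g m n) (m, n))) summable_on UNIV" for m
      using has_sum_imp_summable[OF row_sum[of m]] by simp
  qed simp
  thus ?thesis by (rule abs_summable_summable)
qed

lemma sums_swap_double:
  fixes g :: "nat \<Rightarrow> nat \<Rightarrow> real"
  assumes rows: "\<And>m. summable (\<lambda>n. \<bar>g m n\<bar>)"
    and total: "summable (\<lambda>m. \<Sum>n. \<bar>g m n\<bar>)"
  shows "(\<lambda>n. \<Sum>m. g m n) sums (\<Sum>m. \<Sum>n. g m n)"
proof -
  obtain S where S: "((\<lambda>(m, n). g m n) has_sum S) (UNIV \<times> UNIV)"
    using summable_on_double_series[OF rows total] unfolding summable_on_def by blast
  have "((\<lambda>m. \<Sum>n. g m n) has_sum S) UNIV"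
    by (rule has_sum_SigmaD[OF S]) (use has_sum_suminf_abs[OF rows] in simp)
  hence S_eq: "S = (\<Sum>m. \<Sum>n. g m n)" by (metis has_sum_imp_sums sums_unique)
  have cols: "summable (\<lambda>m. \<bar>g m n\<bar>)" for n
  proof (rule summable_comparison_test'[OF total])
    show "norm \<bar>g m n\<bar> \<le> (\<Sum>n. \<bar>g m n\<bar>)" for m
      using sum_le_suminf[OF rows[of m], of "{n}"] by simp
  qed
  have "((\<lambda>(n, m). g m n) has_sum S) (UNIV \<times> UNIV)"
    using has_sum_swap[of "\<lambda>(m, n). g m n" UNIV UNIV S] S by (simp add: case_prod_unfold)
  hence "((\<lambda>n. \<Sum>m. g m n) has_sum S) UNIV"
    by (rule has_sum_SigmaD) (use has_sum_suminf_abs[OF cols] in simp)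
  thus ?thesis unfolding S_eq by (rule has_sum_imp_sums)
qed

definition zeta :: "nat \<Rightarrow> real" where
  "zeta n = (\<Sum>k. 1 / real (Suc k) ^ n)"

lemma summable_zeta: "2 \<le> n \<Longrightarrow> summable (\<lambda>k. 1 / real (Suc k) ^ n)"
  using inverse_power_summable[of n, where 'a = real] summable_Suc_iff[of "\<lambda>k. inverse (real k ^ n)"]
  by (simp add: divide_inverse)

lemma zeta_sums: "2 \<le> n \<Longrightarrow> (\<lambda>k. 1 / real (Suc k) ^ n) sums zeta n"
  unfolding zeta_def by (rule summable_sums[OF summable_zeta])

lemma zeta_pos: "2 \<le> n \<Longrightarrow> 0 < zeta n"
  unfolding zeta_def by (rule suminf_pos[OF summable_zeta]) auto

lemma geometric_sums_alternating:
  fixes u :: real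
  assumes "0 \<le> u" "u < 1"
  shows "(\<lambda>n. 2 * (-1)^n * u^(Suc n)) sums (2 * u / (1 + u))"
    and "(\<lambda>n. \<bar>2 * (-1)^n * u^(Suc n)\<bar>) sums (2 * u / (1 - u))"
proof -
  show "(\<lambda>n. 2 * (-1)^n * u^(Suc n)) sums (2 * u / (1 + u))"
    using sums_mult[OF geometric_sums[of "- u"], of "2 * u"] assms
    by (simp add: power_minus[of u] mult_ac)
  show "(\<lambda>n. \<bar>2 * (-1)^n * u^(Suc n)\<bar>) sums (2 * u / (1 - u))"
    using sums_mult[OF geometric_sums[of u], of "2 * u"] assms
    by (simp add: abs_mult power_abs mult_ac)
qed

lemma exp_partial_fractions_powser:
  fixes t :: real
  assumes t: "t \<noteq> 0" "\<bar>t\<bar> < 2*pi"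
  shows "(\<lambda>n. 2 * (-1)^n * (t / (2*pi))^(2*n+2) * zeta (2*n+2)) sums (t / (exp t - 1) - 1 + t / 2)"
proof -
  define s where "s = t / (2*pi)"
  have s: "s \<noteq> 0" "s^2 < 1"
    using t by (simp_all add: s_def abs_square_less_1 abs_divide)
  define u where "u m = s^2 / real (Suc m)^2" for m
  have u: "0 < u m" "u m \<le> s^2" for m
    using s by (auto simp: u_def divide_le_eq mult_le_cancel_left1)
  \<comment> \<open>expand each partial fraction of \<open>exp_partial_fractions\<close> into a geometric series in \<open>u m\<close>\<close>
  define g where "g m n = 2 * (-1)^n * (u m)^(Suc n)" for m n
  have row_abs: "(\<lambda>n. \<bar>g m n\<bar>) sums (2 * u m / (1 - u m))" for m
    unfolding g_def using u[of m] s by (intro geometric_sums_alternating) auto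
  have row: "(\<lambda>n. g m n) sums (2 * s^2 / (s^2 + (real (Suc m))^2))" for m
  proof -
    have "(\<lambda>n. g m n) sums (2 * u m / (1 + u m))"
      unfolding g_def using u[of m] s by (intro geometric_sums_alternating) auto
    also have "2 * u m / (1 + u m) = 2 * s^2 / (s^2 + (real (Suc m))^2)"
      by (simp add: u_def field_simps)
    finally show ?thesis .
  qed
  have total: "summable (\<lambda>m. \<Sum>n. \<bar>g m n\<bar>)"
  proof (rule summable_comparison_test')
    show "summable (\<lambda>m. 2 * s^2 / (1 - s^2) * (1 / real (Suc m)^2))"
      using summable_zeta[of 2] by (intro summable_mult) simp
    show "norm (\<Sum>n. \<bar>g m n\<bar>) \<le> 2 * s^2 / (1 - s^2) * (1 / real (Suc m)^2)" for m
    proof -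
      have "(\<Sum>n. \<bar>g m n\<bar>) \<le> 2 * u m / (1 - s^2)"
        using row_abs[of m] u[of m] s by (auto simp: sums_iff intro!: divide_left_mono)
      moreover have "0 \<le> (\<Sum>n. \<bar>g m n\<bar>)"
        using suminf_nonneg[OF sums_summable[OF row_abs[of m]]] by simp
      ultimately show ?thesis by (simp add: u_def mult.commute)
    qed
  qed
  have "(\<lambda>n. \<Sum>m. g m n) sums (\<Sum>m. \<Sum>n. g m n)"
    by (rule sums_swap_double[OF _ total]) (use row_abs in \<open>auto simp: sums_iff\<close>)
  moreover have "(\<Sum>m. g m n) = 2 * (-1)^n * s^(2*n+2) * zeta (2*n+2)" for n
  proof -
    have "(u m)^(Suc n) = s^(2 * Suc n) / real (Suc m)^(2 * Suc n)" for m
      unfolding u_def power_mult power_divide ..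
    hence "g m n = 2 * (-1)^n * s^(2*n+2) * (1 / real (Suc m) ^ (2*n+2))" for m
      by (simp add: g_def)
    thus ?thesis using sums_mult[OF zeta_sums[of "2*n+2"], of "2 * (-1)^n * s^(2*n+2)"]
      by (simp add: sums_iff)
  qed
  moreover have "(\<Sum>m. \<Sum>n. g m n) = t / (exp t - 1) - 1 + t / 2"
    using exp_partial_fractions[OF t(1)] row by (simp add: sums_iff s_def)
  ultimately show ?thesis by (simp add: s_def)
qed

definition bernoulli_euler :: "nat \<Rightarrow> real" where
  "bernoulli_euler n = (if n = 0 then 1 else if n = 1 then -1/2 else if odd n then 0
     else (-1)^(n div 2 + 1) * 2 * fact n * zeta n / (2*pi)^n)"

lemma bernoulli_euler_sums:
  fixes t :: real
  assumes t: "t \<noteq> 0" "\<bar>t\<bar> < 2*pi"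
  shows "(\<lambda>n. bernoulli_euler n * t^n / fact n) sums (t / (exp t - 1))"
proof -
  define h where "h n = 2 * (-1)^n * (t / (2*pi))^(2*n+2) * zeta (2*n+2)" for n
  have "(\<lambda>n. bernoulli_euler (n+2) * t^(n+2) / fact (n+2))
      = (\<lambda>n. if even n then h (n div 2) else 0)"
  proof
    fix n :: nat
    show "bernoulli_euler (n+2) * t^(n+2) / fact (n+2) = (if even n then h (n div 2) else 0)"
    proof (cases "even n")
      case True
      then obtain k where k: "n = 2*k" by auto
      have "bernoulli_euler (n+2) * t^(n+2) / fact (n+2)
          = 2 * (-1)^k * (t^(n+2) / (2*pi)^(n+2)) * zeta (n+2)"
        by (simp add: bernoulli_euler_def k)
      thus ?thesis by (simp add: h_def k power_divide)
    qed (simp add: bernoulli_euler_def)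
  qed
  moreover have "(\<lambda>n. if even n then h (n div 2) else 0) sums (t / (exp t - 1) - 1 + t / 2)"
    using sums_if[OF sums_zero exp_partial_fractions_powser[OF t, folded h_def]] by simp
  ultimately have "(\<lambda>n. bernoulli_euler (n+2) * t^(n+2) / fact (n+2)) sums (t / (exp t - 1) - 1 + t / 2)"
    by simp
  hence "(\<lambda>n. bernoulli_euler n * t^n / fact n) sums
      (t / (exp t - 1) - 1 + t / 2 + (\<Sum>i<2. bernoulli_euler i * t^i / fact i))"
    using sums_iff_shift[of "\<lambda>n. bernoulli_euler n * t^n / fact n" 2] by simp
  moreover have "(\<Sum>i<2. bernoulli_euler i * t^i / fact i) = 1 - t / 2"
    by (simp add: numeral_2_eq_2 bernoulli_euler_def)
  ultimately show ?thesis by simp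
qed

lemma powser_sums_zero_imp_coeff_zero:
  fixes d :: "nat \<Rightarrow> real"
  assumes r: "0 < r" and sums_0: "\<And>t. 0 < t \<Longrightarrow> t < r \<Longrightarrow> (\<lambda>n. d n * t^n) sums 0"
  shows "d k = 0"
proof (induction k rule: less_induct)
  case (less k)
  define e where "e n = d (n + k)" for n
  have e_sums: "(\<lambda>n. e n * t^n) sums 0" if t: "0 < t" "t < r" for t
  proof -
    have "(\<lambda>n. d (n + k) * t^(n + k)) sums 0"
      using sums_iff_shift[of "\<lambda>n. d n * t^n" k] sums_0[OF t] less by simp
    from sums_mult[OF this, of "1 / t^k"] show ?thesis
      using t by (simp add: e_def power_add field_simps)
  qed
  define f where "f x = (\<Sum>n. e n * x^n)" for x :: real
  have "isCont f 0"
    unfolding f_def using e_sums[of "r/2"] r by (intro isCont_powser) (auto simp: sums_iff)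
  hence "(f \<longlongrightarrow> f 0) (at_right 0)" by (simp add: isCont_def filterlim_at_split)
  moreover have "eventually (\<lambda>x. f x = 0) (at_right 0)"
    unfolding eventually_at_right[OF r] using r e_sums by (auto simp: f_def sums_iff)
  ultimately have "f 0 = 0"
    using tendsto_eventually tendsto_unique trivial_limit_at_right_real by blast
  thus ?case by (simp add: f_def e_def)
qed

lemma bernoulli_num_eq_bernoulli_euler: "bernoulli_num = bernoulli_euler"
  unfolding bernoulli_num_def
proof (rule the_equality)
  show "\<forall>t. 0 < \<bar>t\<bar> \<and> \<bar>t\<bar> < 2 * pi \<longrightarrow>
       (\<lambda>n. bernoulli_euler n * t ^ n / fact n) sums (t / (exp t - 1))"
    using bernoulli_euler_sums by auto
  fix B assume B: "\<forall>t. 0 < \<bar>t\<bar> \<and> \<bar>t\<bar> < 2 * pi \<longrightarrow> (\<lambda>n. B n * t ^ n / fact n) sums (t / (exp t - 1))"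
  show "B = bernoulli_euler"
  proof
    fix k
    have "(bernoulli_euler k - B k) / fact k = 0"
    proof (rule powser_sums_zero_imp_coeff_zero[of "2*pi"])
      fix t :: real assume t: "0 < t" "t < 2*pi"
      have "(\<lambda>n. bernoulli_euler n * t^n / fact n - B n * t^n / fact n) sums (t / (exp t - 1) - t / (exp t - 1))"
        using bernoulli_euler_sums B t by (intro sums_diff) auto
      thus "(\<lambda>n. (bernoulli_euler n - B n) / fact n * t^n) sums 0" by (simp add: field_simps)
    qed simp
    thus "B k = bernoulli_euler k" by simp
  qed
qed

lemma abs_bernoulli_num_even:
  assumes "1 \<le> j"
  shows "\<bar>bernoulli_num (2*j)\<bar> = 2 * fact (2*j) * zeta (2*j) / (2*pi)^(2*j)"
  using assms zeta_pos[of "2*j"]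
  by (simp add: bernoulli_num_eq_bernoulli_euler bernoulli_euler_def abs_mult)

section \<open>The remainder series\<close>

definition tail_factor :: "nat \<Rightarrow> real \<Rightarrow> real" where
  "tail_factor N u = 1 / (1 - u) - (1/4)^N / (1 - u/4)"

lemma geometric_remainder_difference:
  fixes u :: real
  assumes "1 \<le> N" "u < 1"
  shows "2 * u / (1 - u) - 2 * u / (1 - u/4) - (\<Sum>j=2..N. 2 * (u^j - 4 * (u/4)^j))
       = 2 * u^(N+1) * tail_factor N u"
proof -
  have geom: "(\<Sum>j=2..N. x^j) = (x^2 - x^(N+1)) / (1 - x)" if "x \<noteq> 1" for x :: real
    using assms(1) that by (cases "N = 1") (simp_all add: sum_gp power2_eq_square)
  have "(\<Sum>j=2..N. 2 * (u^j - 4 * (u/4)^j)) = 2 * (\<Sum>j=2..N. u^j) - 8 * (\<Sum>j=2..N. (u/4)^j)"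
    by (simp add: sum_subtractf sum_distrib_left)
  also have "\<dots> = 2 * ((u^2 - u^(N+1)) / (1 - u)) - 8 * (((u/4)^2 - (u/4)^(N+1)) / (1 - u/4))"
    using assms(2) by (simp only: geom)
  finally have sum: "(\<Sum>j=2..N. 2 * (u^j - 4 * (u/4)^j))
      = 2 * ((u^2 - u^(N+1)) / (1 - u)) - 8 * (((u/4)^2 - (u/4)^(N+1)) / (1 - u/4))" .
  have split: "2 * x / d - 2 * ((k * x^2 - Q) / d) = 2 * x * (1 - k * x) / d + 2 * Q / d"
    if "d \<noteq> 0" for d k x Q :: real
    using that by (simp add: field_simps power2_eq_square)
  have "1 - u \<noteq> 0" "1 - u/4 \<noteq> 0" using assms(2) by auto
  from split[OF this(1), where k = 1 and x = u and Q = "u^(N+1)"]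
    split[OF this(2), where k = "1/4" and x = u and Q = "(1/4)^N * u^(N+1)"] this
  have "2 * u / (1 - u) - 2 * ((u^2 - u^(N+1)) / (1 - u)) = 2 * u + 2 * u^(N+1) / (1 - u)"
    "2 * u / (1 - u/4) - 2 * ((1/4 * u^2 - (1/4)^N * u^(N+1)) / (1 - u/4))
       = 2 * u + 2 * ((1/4)^N * u^(N+1)) / (1 - u/4)"
    by simp_all
  moreover have "8 * ((u/4)^2 - (u/4)^(N+1)) = 2 * (1/4 * u^2 - (1/4)^N * u^(N+1))"
    by (simp add: power_divide field_simps)
  hence "8 * (((u/4)^2 - (u/4)^(N+1)) / (1 - u/4))
      = 2 * ((1/4 * u^2 - (1/4)^N * u^(N+1)) / (1 - u/4))"
    by (metis times_divide_eq_right)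
  ultimately show ?thesis
    unfolding sum tail_factor_def by (simp add: algebra_simps)
qed

lemma tail_factor_bounds:
  assumes "0 \<le> u" "u \<le> 1/4"
  shows "0 \<le> tail_factor N u" "tail_factor N u \<le> 4/3"
proof -
  have "(1/4::real)^N \<le> 1" by (simp add: power_le_one)
  hence "(1/4::real)^N / (1 - u/4) \<le> 1 / (1 - u)"
    using assms by (intro frac_le) auto
  moreover have "1 / (1 - u) \<le> 4/3" "0 \<le> (1/4::real)^N / (1 - u/4)"
    using assms by (simp_all add: field_simps)
  ultimately show "0 \<le> tail_factor N u" "tail_factor N u \<le> 4/3"
    unfolding tail_factor_def by linarith+
qed

lemma tail_factor_strict_mono:
  assumes "0 \<le> p" "p < q" "q \<le> 1/4"
  shows "tail_factor N p < tail_factor N q"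
proof -
  define c where "c = (1/4::real)^N"
  have c: "0 \<le> c" "c \<le> 1" by (simp_all add: c_def power_le_one)
  \<comment> \<open>both summands are increasing, the second strictly\<close>
  have regroup: "1 / a - c / b = (1 - c) / b + (b - a) / (a * b)" if "a \<noteq> 0" "b \<noteq> 0" for a b :: real
    using that by (simp add: field_simps)
  have split: "tail_factor N u = (1 - c) / (1 - u/4) + 3/4 * u / ((1 - u) * (1 - u/4))"
    if "u < 1" for u
  proof -
    have "1 - u \<noteq> 0" "1 - u/4 \<noteq> 0" using that by auto
    from regroup[OF this] show ?thesis by (simp add: tail_factor_def c_def)
  qed
  have "(1 - c) / (1 - p/4) \<le> (1 - c) / (1 - q/4)"
    using assms c by (intro divide_left_mono) auto
  moreover have "3/4 * p / ((1 - p) * (1 - p/4)) < 3/4 * q / ((1 - q) * (1 - q/4))"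
    using assms by (intro frac_less mult_mono mult_pos_pos) auto
  ultimately show ?thesis using assms by (simp add: split)
qed

lemma tail_factor_le_linear:
  assumes "0 \<le> u" "u \<le> 1/2"
  shows "tail_factor N u \<le> tail_factor N 0 + 2 * u"
proof -
  have "(1/4::real)^N \<le> (1/4)^N / (1 - u/4)"
    using assms by (simp add: field_simps)
  moreover have "1 / (1 - u) \<le> 1 + 2 * u"
    using assms mult_left_mono[of u "1/2" "2 * u"] by (simp add: field_simps)
  ultimately show ?thesis unfolding tail_factor_def by simp
qed

text \<open>
  In the notation of the proof idea, \<open>tail_factor\<close> is \<open>\<psi>\<close>, \<open>tail_coeff\<close> is \<open>\<Psi>\<close>, and
  \<open>x^(2N+2) * tail_term N ((x/\<pi>)\<^sup>2) m\<close> is the \<open>(m+1)\<close>-st term of the series minus its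
  Taylor polynomial of degree \<open>2N\<close>.
\<close>

definition tail_term :: "nat \<Rightarrow> real \<Rightarrow> nat \<Rightarrow> real" where
  "tail_term N v m = 2 / (pi^(2*N+2) * real (Suc m)^(2*N+2)) * tail_factor N (v / real (Suc m)^2)"

definition tail_coeff :: "nat \<Rightarrow> real \<Rightarrow> real" where
  "tail_coeff N v = (\<Sum>m. tail_term N v m)"

lemma div_Suc_sq_bounds:
  assumes "0 \<le> v" "v \<le> 1/4"
  shows "0 \<le> v / real (Suc m)^2" "v / real (Suc m)^2 \<le> v" "v / real (Suc m)^2 \<le> 1/4"
proof -
  show "0 \<le> v / real (Suc m)^2" "v / real (Suc m)^2 \<le> v"
    using assms by (simp_all add: divide_le_eq mult_le_cancel_left1)
  thus "v / real (Suc m)^2 \<le> 1/4" using assms by linarith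
qed

lemma summable_tail_term:
  assumes "0 \<le> v" "v \<le> 1/4"
  shows "summable (tail_term N v)"
proof (rule summable_comparison_test')
  show "summable (\<lambda>m. 8/3 / pi^(2*N+2) * (1 / real (Suc m)^(2*N+2)))"
    by (intro summable_mult summable_zeta) simp
  fix m
  define C where "C = 2 / (pi^(2*N+2) * real (Suc m)^(2*N+2))"
  have "0 \<le> tail_factor N (v / real (Suc m)^2)" "tail_factor N (v / real (Suc m)^2) \<le> 4/3"
    using tail_factor_bounds[OF div_Suc_sq_bounds(1,3)[OF assms]] by auto
  moreover have "tail_term N v m = C * tail_factor N (v / real (Suc m)^2)"
    unfolding tail_term_def C_def ..
  moreover have "0 < C" by (simp add: C_def)
  ultimately have "norm (tail_term N v m) \<le> C * (4/3)"
    by (simp add: abs_mult)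
  also have "C * (4/3) = 8/3 / pi^(2*N+2) * (1 / real (Suc m)^(2*N+2))"
    unfolding C_def by (simp add: field_simps)
  finally show "norm (tail_term N v m) \<le> 8/3 / pi^(2*N+2) * (1 / real (Suc m)^(2*N+2))" .
qed

lemma tail_coeff_strict_mono:
  assumes "0 \<le> v" "v < w" "w \<le> 1/4"
  shows "tail_coeff N v < tail_coeff N w"
proof -
  have "tail_factor N (v / real (Suc m)^2) < tail_factor N (w / real (Suc m)^2)" for m
    using assms div_Suc_sq_bounds(3)[of w m]
    by (intro tail_factor_strict_mono) (auto intro: divide_strict_right_mono)
  hence "tail_term N v m < tail_term N w m" for m
    unfolding tail_term_def by (intro mult_strict_left_mono) auto
  moreover have "summable (tail_term N v)" "summable (tail_term N w)"
    using assms by (auto intro: summable_tail_term)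
  ultimately have "0 < (\<Sum>m. tail_term N w m - tail_term N v m)"
    by (intro suminf_pos summable_diff) auto
  also have "\<dots> = tail_coeff N w - tail_coeff N v"
    unfolding tail_coeff_def
    using suminf_diff[OF \<open>summable (tail_term N w)\<close> \<open>summable (tail_term N v)\<close>] by simp
  finally show ?thesis by simp
qed

lemma tail_coeff_zero:
  "tail_coeff N 0 = 2 * (1 - (1/4)^N) * zeta (2*N+2) / pi^(2*N+2)"
proof -
  have "tail_term N 0 = (\<lambda>m. 2 * (1 - (1/4)^N) / pi^(2*N+2) * (1 / real (Suc m)^(2*N+2)))"
    by (simp add: tail_term_def tail_factor_def fun_eq_iff)
  thus ?thesis
    using sums_mult[OF zeta_sums[of "2*N+2"], of "2 * (1 - (1/4)^N) / pi^(2*N+2)"]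
    by (simp add: tail_coeff_def sums_iff)
qed

lemma tail_coeff_le_linear:
  assumes "0 \<le> v" "v \<le> 1/4"
  shows "tail_coeff N v \<le> tail_coeff N 0 + v * (4 * zeta (2*N+2) / pi^(2*N+2))"
proof -
  define e where "e m = 4 * v / pi^(2*N+2) * (1 / real (Suc m)^(2*N+2))" for m
  have e: "e sums (4 * v / pi^(2*N+2) * zeta (2*N+2))"
    unfolding e_def by (intro sums_mult zeta_sums) simp
  have "tail_term N v m \<le> tail_term N 0 m + e m" for m
  proof -
    define C where "C = 2 / (pi^(2*N+2) * real (Suc m)^(2*N+2))"
    have "tail_factor N (v / real (Suc m)^2) \<le> tail_factor N 0 + 2 * v"
      using tail_factor_le_linear[of "v / real (Suc m)^2" N] div_Suc_sq_bounds[OF assms, of m] by simp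
    moreover have "tail_term N v m = C * tail_factor N (v / real (Suc m)^2)"
      unfolding tail_term_def C_def ..
    moreover have "0 < C" by (simp add: C_def)
    ultimately have "tail_term N v m \<le> C * (tail_factor N 0 + 2 * v)"
      by simp
    also have "\<dots> = tail_term N 0 m + e m"
    proof -
      define P K where "P = pi^(2*N+2)" and "K = real (Suc m)^(2*N+2)"
      have "P \<noteq> 0" "K \<noteq> 0" by (simp_all add: P_def K_def)
      thus ?thesis
        unfolding tail_term_def C_def e_def P_def[symmetric] K_def[symmetric] by (simp add: field_simps)
    qed
    finally show ?thesis .
  qed
  hence "tail_coeff N v \<le> (\<Sum>m. tail_term N 0 m + e m)"
    unfolding tail_coeff_def using assms
    by (intro suminf_le summable_add summable_tail_term sums_summable[OF e]) auto
  also have "\<dots> = tail_coeff N 0 + 4 * v / pi^(2*N+2) * zeta (2*N+2)"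
    unfolding tail_coeff_def using e
    by (subst suminf_add[symmetric]) (auto intro: summable_tail_term simp: sums_iff)
  finally show ?thesis by (simp add: mult_ac)
qed

lemma power2_div_le_quarter:
  fixes x M :: real
  assumes "0 < M" "\<bar>x\<bar> \<le> M/2"
  shows "(x/M)^2 \<le> 1/4"
proof -
  have "(x/M)^2 = \<bar>x/M\<bar>^2" by (rule power2_abs[symmetric])
  also have "\<dots> \<le> (1/2)^2" using assms by (intro power_mono) (auto simp: abs_divide divide_le_eq)
  finally show ?thesis by (simp add: power2_eq_square)
qed

lemma power2_div_less_quarter:
  fixes x M :: real
  assumes "0 < M" "\<bar>x\<bar> < M/2"
  shows "(x/M)^2 < 1/4"
proof -
  have "(x/M)^2 = \<bar>x/M\<bar>^2" by (rule power2_abs[symmetric])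
  also have "\<dots> < (1/2)^2" using assms by (intro power_strict_mono) (auto simp: abs_divide divide_less_eq)
  finally show ?thesis by (simp add: power2_eq_square)
qed

lemma sin_tan_half_angle:
  fixes x :: real
  assumes "x \<noteq> 0" "\<bar>x\<bar> < pi"
  shows "2 * (x / sin x) + x / tan x = 4 * ((x/2) * cot (x/2)) - x * cot x"
proof -
  have "sin (x/2) \<noteq> 0"
    using assms by (auto simp: sin_zero_iff_int2 abs_mult)
  moreover have "cos (x/2) \<noteq> 0"
    using assms by (intro order.strict_implies_not_eq[symmetric] cos_gt_zero_pi) auto
  moreover have double: "sin x = 2 * sin (x/2) * cos (x/2)" "cos x = 2 * cos (x/2)^2 - 1"
    using sin_double[of "x/2"] cos_double_cos[of "x/2"] by simp_all
  ultimately show ?thesis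
    unfolding tan_def cot_def double by (simp add: field_simps power2_eq_square)
qed

lemma partial_fraction_term_remainder:
  fixes x :: real
  assumes N: "1 \<le> N" and x: "\<bar>x\<bar> \<le> pi/2"
  shows "4 * (2 * (x/2)^2 / ((x/2)^2 - (real (Suc m) * pi)^2)) - 2 * x^2 / (x^2 - (real (Suc m) * pi)^2)
          - (\<Sum>j=2..N. 2 * ((x/pi)^(2*j) - 4 * (x/(2*pi))^(2*j)) / real (Suc m)^(2*j))
         = x^(2*N+2) * tail_term N ((x/pi)^2) m"
proof -
  define M where "M = real (Suc m) * pi"
  define u where "u = (x/M)^2"
  have M: "0 < M" "pi \<le> M" by (simp_all add: M_def)
  hence "u \<le> 1/4" unfolding u_def using x by (intro power2_div_le_quarter) auto
  hence u: "u < 1" "u \<noteq> 4" by auto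
  have x2: "x^2 = u * M^2" "(x/2)^2 = u/4 * M^2" using M by (simp_all add: u_def power_divide)
  have "2 * x^2 / (x^2 - M^2) = - (2 * u / (1 - u))"
    "4 * (2 * (x/2)^2 / ((x/2)^2 - M^2)) = - (2 * u / (1 - u/4))"
    unfolding x2 using M u by (simp_all add: field_simps)
  moreover have "2 * ((x/pi)^(2*j) - 4 * (x/(2*pi))^(2*j)) / real (Suc m)^(2*j)
      = 2 * (u^j - 4 * (u/4)^j)" for j
  proof -
    have "u/4 = (x/(2*M))^2" by (simp add: u_def power_divide)
    hence "(x/pi)^(2*j) / real (Suc m)^(2*j) = u^j" "(x/(2*pi))^(2*j) / real (Suc m)^(2*j) = (u/4)^j"
      unfolding u_def M_def power_mult by (simp_all add: power_divide power_mult_distrib)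
    thus ?thesis by (simp add: diff_divide_distrib)
  qed
  moreover have "x^(2*N+2) * tail_term N ((x/pi)^2) m = 2 * u^(N+1) * tail_factor N u"
  proof -
    have "(x/pi)^2 / real (Suc m)^2 = u"
      by (simp add: u_def M_def power_divide power_mult_distrib)
    hence "x^(2*N+2) * tail_term N ((x/pi)^2) m
        = 2 * (x^(2*N+2) / (pi^(2*N+2) * real (Suc m)^(2*N+2))) * tail_factor N u"
      by (simp add: tail_term_def)
    also have "x^(2*N+2) / (pi^(2*N+2) * real (Suc m)^(2*N+2)) = u^(N+1)"
      unfolding u_def M_def power_mult[symmetric] mult_2[symmetric]
      by (simp add: power_divide power_mult_distrib mult.commute)
    finally show ?thesis .
  qed
  ultimately show ?thesis
    unfolding M_def[symmetric] using geometric_remainder_difference[OF N u(1)] by simp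
qed

lemma bernoulli_term_sums:
  fixes x :: real
  assumes "1 \<le> j"
  shows "(\<lambda>m. 2 * ((x/pi)^(2*j) - 4 * (x/(2*pi))^(2*j)) / real (Suc m)^(2*j))
           sums ((2^(2*j) - 4) * \<bar>bernoulli_num (2*j)\<bar> / fact (2*j) * x^(2*j))"
proof -
  have "(x/pi)^(2*j) = 2^(2*j) * (x/(2*pi))^(2*j)"
    by (simp flip: power_mult_distrib)
  hence "(2^(2*j) - 4) * \<bar>bernoulli_num (2*j)\<bar> / fact (2*j) * x^(2*j)
      = 2 * ((x/pi)^(2*j) - 4 * (x/(2*pi))^(2*j)) * zeta (2*j)"
    unfolding abs_bernoulli_num_even[OF assms] by (simp add: power_divide field_simps)
  thus ?thesis
    using sums_mult[OF zeta_sums[of "2*j"], of "2 * ((x/pi)^(2*j) - 4 * (x/(2*pi))^(2*j))"] assms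
    by simp
qed

definition sin_tan_remainder :: "nat \<Rightarrow> real \<Rightarrow> real" where
  "sin_tan_remainder N x = 2 * (x / sin x) + x / tan x
     - (3 + (\<Sum>j=2..N. (2 ^ (2*j) - 4) * \<bar>bernoulli_num (2*j)\<bar> / fact (2*j) * x ^ (2*j)))"

lemma sin_tan_remainder_eq_tail_coeff:
  fixes x :: real
  assumes N: "1 \<le> N" and x: "x \<noteq> 0" "\<bar>x\<bar> \<le> pi/2"
  shows "sin_tan_remainder N x = x^(2*N+2) * tail_coeff N ((x/pi)^2)"
proof -
  have "\<bar>x\<bar> < pi" "\<bar>x/2\<bar> < pi" using x(2) pi_gt_zero by linarith+
  have v: "0 \<le> (x/pi)^2" "(x/pi)^2 \<le> 1/4"
    using power2_div_le_quarter[OF pi_gt_zero x(2)] by simp_all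
  have "(\<lambda>m. 4 * (2 * (x/2)^2 / ((x/2)^2 - (real (Suc m) * pi)^2)) - 2 * x^2 / (x^2 - (real (Suc m) * pi)^2)
          - (\<Sum>j=2..N. 2 * ((x/pi)^(2*j) - 4 * (x/(2*pi))^(2*j)) / real (Suc m)^(2*j)))
      sums (4 * ((x/2) * cot (x/2) - 1) - (x * cot x - 1)
          - (\<Sum>j=2..N. (2^(2*j) - 4) * \<bar>bernoulli_num (2*j)\<bar> / fact (2*j) * x^(2*j)))"
    using x \<open>\<bar>x\<bar> < pi\<close> \<open>\<bar>x/2\<bar> < pi\<close>
    by (intro sums_diff sums_mult cot_partial_fractions sums_sum bernoulli_term_sums) auto
  moreover have "(\<lambda>m. x^(2*N+2) * tail_term N ((x/pi)^2) m) sums (x^(2*N+2) * tail_coeff N ((x/pi)^2))"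
    unfolding tail_coeff_def using v by (intro sums_mult summable_sums summable_tail_term)
  ultimately have "4 * ((x/2) * cot (x/2) - 1) - (x * cot x - 1)
          - (\<Sum>j=2..N. (2^(2*j) - 4) * \<bar>bernoulli_num (2*j)\<bar> / fact (2*j) * x^(2*j))
      = x^(2*N+2) * tail_coeff N ((x/pi)^2)"
    unfolding partial_fraction_term_remainder[OF N x(2)] by (rule sums_unique2)
  thus ?thesis
    unfolding sin_tan_remainder_def sin_tan_half_angle[OF x(1) \<open>\<bar>x\<bar> < pi\<close>] by simp
qed

section \<open>The constants\<close>

lemma tail_coeff_zero_eq:
  assumes "1 \<le> N"
  shows "tail_coeff N 0 = (2 ^ (2*N+2) - 4) * \<bar>bernoulli_num (2*N+2)\<bar> / fact (2*N+2)"
proof -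
  have pow: "(2::real)^(2*N+2) = 4 * 4^N" by (simp add: power_add power_mult)
  have "\<bar>bernoulli_num (2*N+2)\<bar> = 2 * fact (2*N+2) * zeta (2*N+2) / (2*pi)^(2*N+2)"
    using abs_bernoulli_num_even[of "N+1"] by (simp only: mult_Suc_right add_2_eq_Suc') simp
  also have "(2*pi)^(2*N+2) = 4 * 4^N * pi^(2*N+2)"
    unfolding power_mult_distrib pow ..
  finally have "\<bar>bernoulli_num (2*N+2)\<bar> = 2 * fact (2*N+2) * zeta (2*N+2) / (4 * 4^N * pi^(2*N+2))" .
  hence "(2 ^ (2*N+2) - 4) * \<bar>bernoulli_num (2*N+2)\<bar> / fact (2*N+2)
      = (4 * 4^N - 4) * (2 * fact (2*N+2) * zeta (2*N+2) / (4 * 4^N * pi^(2*N+2))) / fact (2*N+2)"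
    unfolding pow by simp
  also have "\<dots> = 2 * (1 - 1 / 4^N) * zeta (2*N+2) / pi^(2*N+2)"
  proof -
    have gen: "(4 * X - 4) * (2 * F * Z / (4 * X * P)) / F = 2 * (1 - 1 / X) * Z / P"
      if "0 < X" "0 < P" "F \<noteq> 0" for X P F Z :: real
      using that by (simp add: field_simps)
    show ?thesis by (rule gen) simp_all
  qed
  finally show ?thesis by (simp add: tail_coeff_zero power_one_over)
qed

lemma summable_div_power_mult:
  fixes s d :: "nat \<Rightarrow> real"
  assumes "1 \<le> N" "\<And>m. \<bar>s m\<bar> \<le> C" "\<And>m. 1 \<le> d m"
  shows "summable (\<lambda>m. s m / (real (Suc m)^(2*N) * d m))"
proof (rule summable_comparison_test')
  show "summable (\<lambda>m. C * (1 / real (Suc m)^(2*N)))"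
    using assms(1) by (intro summable_mult summable_zeta) simp
  show "norm (s m / (real (Suc m)^(2*N) * d m)) \<le> C * (1 / real (Suc m)^(2*N))" for m
  proof -
    have "norm (s m / (real (Suc m)^(2*N) * d m)) = \<bar>s m\<bar> / d m / real (Suc m)^(2*N)"
      using assms(3)[of m] by (simp add: abs_mult abs_divide field_simps)
    also have "\<dots> \<le> C / 1 / real (Suc m)^(2*N)"
      using assms(2,3)[of m] by (intro divide_right_mono frac_le) auto
    finally show ?thesis by simp
  qed
qed

lemma tail_term_quarter:
  "tail_term N (1/4) m = 1 / pi^(2*N+2) * (8 / (real (Suc m)^(2*N) * (4 * real (Suc m)^2 - 1))
     - 32 * (1/4)^N / (real (Suc m)^(2*N) * (16 * real (Suc m)^2 - 1)))"
proof -
  define K where "K = real (Suc m)"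
  define P where "P = pi^(2*N+2)"
  have K: "1 \<le> K^2" "0 < K^(2*N)" "0 < K" by (simp_all add: K_def)
  have "1 / (1 - 1/4/Q) = 4*Q / (4*Q - 1)" "c / (1 - 1/4/Q/4) = c * (16*Q / (16*Q - 1))"
    if "1 \<le> Q" for Q c :: real
    using that by (simp_all add: field_simps)
  hence "tail_factor N (1/4 / K^2) = 4*K^2 / (4*K^2 - 1) - (1/4)^N * (16*K^2 / (16*K^2 - 1))"
    using K by (simp add: tail_factor_def)
  hence "tail_term N (1/4) m
      = 2 / (P * (K^(2*N) * K^2)) * (4*K^2 / (4*K^2 - 1) - (1/4)^N * (16*K^2 / (16*K^2 - 1)))"
    unfolding tail_term_def K_def[symmetric] P_def[symmetric] power_add[of K] by simp
  also have "\<dots> = 1 / P * (8 / (K^(2*N) * (4*K^2 - 1)) - 32 * (1/4)^N / (K^(2*N) * (16*K^2 - 1)))"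
  proof -
    have gen: "2 / (P * (Kp * Q)) * (4*Q/A - c * (16*Q/B)) = 1/P * (8/(Kp*A) - 32*c/(Kp*B))"
      if "0 < P" "0 < Kp" "0 < Q" "0 < A" "0 < B" for P Kp Q A B c :: real
      using that by (simp add: field_simps)
    show ?thesis by (rule gen) (use K in \<open>simp_all add: P_def\<close>)
  qed
  finally show ?thesis unfolding K_def P_def .
qed

lemma odd_neighbours_partial_fractions:
  fixes K D s :: real
  assumes "1 \<le> K" "0 < D"
  shows "8 * (s / (D * (2*K - 1)) - s / (D * (2*K + 1))) - 4 * (1 / (D * (2*K - 1)) - 1 / (D * (2*K + 1)))
       = 8 / (D * (4*K^2 - 1)) - 16 * (1 - s) / (D * (4*K^2 - 1))"
proof -
  define A B where "A = 2*K - 1" and "B = 2*K + 1"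
  have AB: "0 < A" "0 < B" "4*K^2 - 1 = A * B" "B - A = 2"
    using assms(1) by (simp_all add: A_def B_def algebra_simps power2_eq_square)
  have "x / (D * A) - x / (D * B) = x * (B - A) / (D * (A * B))" for x
    using AB(1,2) assms(2) by (simp add: field_simps)
  hence diff: "x / (D * A) - x / (D * B) = 2 * x / (D * (A * B))" for x
    unfolding AB(4) by (simp add: mult.commute)
  have "8 * (2 * s / Q) - 4 * (2 * 1 / Q) = 8 / Q - 16 * (1 - s) / Q" for Q :: real
    by (cases "Q = 0") (simp_all add: field_simps)
  thus ?thesis
    unfolding A_def[symmetric] B_def[symmetric] AB(3) diff .
qed

lemma sums_even_terms_only:
  assumes N: "1 \<le> N"
  shows "(\<lambda>k. 16 * (1 - (-1)^k) / (real (Suc k)^(2*N) * (4 * real (Suc k)^2 - 1)))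
           sums (\<Sum>m. 32 * (1/4)^N / (real (Suc m)^(2*N) * (16 * real (Suc m)^2 - 1)))"
proof -
  define g where "g m = 32 * (1/4)^N / (real (Suc m)^(2*N) * (16 * real (Suc m)^2 - 1))" for m
  have "1 \<le> 16 * real (Suc m)^2 - 1" for m
    using one_le_power[of "real (Suc m)" 2] by linarith
  hence "summable g"
    unfolding g_def by (intro summable_div_power_mult[OF N, where C = 32]) (auto simp: power_le_one)
  moreover have "16 * (1 - (-1)^n) / (real (Suc n)^(2*N) * (4 * real (Suc n)^2 - 1))
      = (if even n then 0 else g ((n - 1) div 2))" for n
  proof (cases "even n")
    case False
    then obtain i where i: "n = 2*i + 1" by (metis oddE)
    define a where "a = real (Suc i)"
    have "real (Suc n) = 2 * a" "(-1::real)^n = -1" by (simp_all add: i a_def)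
    moreover have "(2 * a)^(2*N) = 4^N * a^(2*N)" "4 * (2 * a)^2 - 1 = 16 * a^2 - 1"
      by (simp_all add: power_mult_distrib power_mult)
    ultimately show ?thesis
      using False by (simp add: g_def i a_def power_one_over field_simps)
  qed simp
  ultimately have "(\<lambda>k. 16 * (1 - (-1)^k) / (real (Suc k)^(2*N) * (4 * real (Suc k)^2 - 1)))
      sums suminf g"
    using sums_if'[OF summable_sums, of g] by simp
  thus ?thesis unfolding g_def[abs_def] .
qed

lemma tail_coeff_quarter_eq:
  assumes N: "1 \<le> N"
  shows "tail_coeff N (1/4) = 8 / pi ^ (2*N+2) *
             ((\<Sum>k. (-1) ^ (k+2) / (real (k+1) ^ (2*N) * (2 * real (k+1) - 1)))
              - (\<Sum>k. (-1) ^ (k+2) / (real (k+1) ^ (2*N) * (2 * real (k+1) + 1))))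
           - 4 / pi ^ (2*N+2) *
             ((\<Sum>k. 1 / (real (k+1) ^ (2*N) * (2 * real (k+1) - 1)))
              - (\<Sum>k. 1 / (real (k+1) ^ (2*N) * (2 * real (k+1) + 1))))"
    (is "_ = 8 / ?P * (suminf ?s1 - suminf ?s2) - 4 / ?P * (suminf ?t1 - suminf ?t2)")
proof -
  define h where "h m = 8 / (real (Suc m)^(2*N) * (4 * real (Suc m)^2 - 1))" for m
  define g where "g m = 32 * (1/4)^N / (real (Suc m)^(2*N) * (16 * real (Suc m)^2 - 1))" for m
  define e where "e k = 16 * (1 - (-1)^k) / (real (Suc k)^(2*N) * (4 * real (Suc k)^2 - 1))" for k
  have sq: "1 \<le> 4 * real (Suc m)^2 - 1" "1 \<le> 16 * real (Suc m)^2 - 1" for m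
    using one_le_power[of "real (Suc m)" 2] by linarith+
  have h: "summable h"
    unfolding h_def by (rule summable_div_power_mult[OF N, where C = 8]) (use sq in auto)
  have g: "summable g"
    unfolding g_def by (rule summable_div_power_mult[OF N, where C = 32]) (use sq in \<open>auto simp: power_le_one\<close>)
  have "summable ?s1" "summable ?s2" "summable ?t1" "summable ?t2"
    using summable_div_power_mult[OF N, where C = 1] by simp_all
  hence b_sums: "(\<lambda>k. 8 / ?P * (?s1 k - ?s2 k) - 4 / ?P * (?t1 k - ?t2 k))
      sums (8 / ?P * (suminf ?s1 - suminf ?s2) - 4 / ?P * (suminf ?t1 - suminf ?t2))"
    by (intro sums_mult sums_diff summable_sums)
  have b_terms: "8 / ?P * (?s1 k - ?s2 k) - 4 / ?P * (?t1 k - ?t2 k) = 1 / ?P * (h k - e k)" for k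
  proof -
    have distrib: "8 / P * a - 4 / P * b = 1 / P * (8 * a - 4 * b)" for P a b :: real
      by (cases "P = 0") (simp_all add: field_simps)
    have "8 * (?s1 k - ?s2 k) - 4 * (?t1 k - ?t2 k) = h k - e k"
      using odd_neighbours_partial_fractions[where K = "real (k+1)" and D = "real (k+1)^(2*N)" and s = "(-1)^k"]
      by (simp add: h_def e_def)
    thus ?thesis unfolding distrib by simp
  qed
  have "e sums suminf g"
    using sums_even_terms_only[OF N] unfolding e_def[abs_def] g_def[abs_def] .
  hence he_sums: "(\<lambda>k. 1 / ?P * (h k - e k)) sums (1 / ?P * (suminf h - suminf g))"
    using h by (intro sums_mult sums_diff summable_sums)
  have "tail_coeff N (1/4) = 1 / ?P * (suminf h - suminf g)"
    unfolding tail_coeff_def tail_term_quarter h_def[symmetric] g_def[symmetric]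
    using suminf_divide[OF summable_diff[OF h g]] suminf_diff[OF h g] by simp
  also have "\<dots> = 8 / ?P * (suminf ?s1 - suminf ?s2) - 4 / ?P * (suminf ?t1 - suminf ?t2)"
    using he_sums b_sums unfolding b_terms by (rule sums_unique2)
  finally show ?thesis .
qed

lemma sin_tan_remainder_over_power:
  fixes x :: real
  assumes N: "1 \<le> N" and x: "0 < \<bar>x\<bar>" "\<bar>x\<bar> < pi/2"
  shows "sin_tan_remainder N x / x^(2*N+2) = tail_coeff N ((x/pi)^2)"
    and "0 < x^(2*N+2)" "0 < (x/pi)^2" "(x/pi)^2 < 1/4"
proof -
  show "0 < x^(2*N+2)" using x(1) by (intro zero_less_power_eq[THEN iffD2]) simp
  show "0 < (x/pi)^2" using x(1) by simp
  show "sin_tan_remainder N x / x^(2*N+2) = tail_coeff N ((x/pi)^2)"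
    using sin_tan_remainder_eq_tail_coeff[OF N _ less_imp_le[OF x(2)]] x(1) by simp
  show "(x/pi)^2 < 1/4" using power2_div_less_quarter[OF pi_gt_zero x(2)] .
qed

lemma sin_tan_remainder_bounds:
  fixes x :: real
  assumes N: "1 \<le> N" and x: "0 < \<bar>x\<bar>" "\<bar>x\<bar> < pi/2"
  shows "tail_coeff N 0 * x^(2*N+2) < sin_tan_remainder N x"
    and "sin_tan_remainder N x < tail_coeff N (1/4) * x^(2*N+2)"
proof -
  note v = sin_tan_remainder_over_power[OF N x]
  have "tail_coeff N 0 < sin_tan_remainder N x / x^(2*N+2)"
    "sin_tan_remainder N x / x^(2*N+2) < tail_coeff N (1/4)"
    unfolding v(1) using v(3,4) by (auto intro: tail_coeff_strict_mono)
  thus "tail_coeff N 0 * x^(2*N+2) < sin_tan_remainder N x"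
    "sin_tan_remainder N x < tail_coeff N (1/4) * x^(2*N+2)"
    using v(2) by (simp_all add: less_divide_eq divide_less_eq)
qed

lemma sin_tan_remainder_lower_constant_sharp:
  assumes N: "1 \<le> N"
    and c: "\<forall>x::real. 0 < \<bar>x\<bar> \<and> \<bar>x\<bar> < pi/2 \<longrightarrow> c * x^(2*N+2) < sin_tan_remainder N x"
  shows "c \<le> tail_coeff N 0"
proof -
  define K where "K = 4 * zeta (2*N+2) / pi^(2*N+2)"
  have "c \<le> tail_coeff N 0 + v * K" if v: "0 < v" "v < 1/4" for v
  proof -
    define x where "x = pi * sqrt v"
    have x: "0 < \<bar>x\<bar>" "\<bar>x\<bar> < pi/2"
      using v real_sqrt_less_iff[of v "1/4"] by (simp_all add: x_def real_sqrt_divide)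
    note x_props = sin_tan_remainder_over_power[OF N x]
    have "c * x^(2*N+2) < sin_tan_remainder N x" using c x by blast
    hence "c < sin_tan_remainder N x / x^(2*N+2)" using x_props(2) by (simp add: less_divide_eq)
    also have "\<dots> = tail_coeff N ((x/pi)^2)" by (rule x_props(1))
    also have "(x/pi)^2 = v" using v by (simp add: x_def)
    finally have "c < tail_coeff N v" .
    also have "\<dots> \<le> tail_coeff N 0 + v * K"
      unfolding K_def using v by (intro tail_coeff_le_linear) auto
    finally show ?thesis by simp
  qed
  hence "eventually (\<lambda>v. c \<le> tail_coeff N 0 + v * K) (at_right 0)"
    unfolding eventually_at_right_field by (intro exI[of _ "1/4"]) auto
  moreover have "((\<lambda>v. tail_coeff N 0 + v * K) \<longlongrightarrow> tail_coeff N 0) (at_right 0)"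
    by (auto intro!: tendsto_eq_intros)
  ultimately show ?thesis
    by (intro tendsto_lowerbound[where F = "at_right 0"]) auto
qed

lemma sin_tan_remainder_upper_constant_sharp:
  assumes N: "1 \<le> N"
    and c: "\<forall>x::real. 0 < \<bar>x\<bar> \<and> \<bar>x\<bar> < pi/2 \<longrightarrow> sin_tan_remainder N x < c * x^(2*N+2)"
  shows "tail_coeff N (1/4) \<le> c"
proof -
  define Q where "Q x = sin_tan_remainder N x / x^(2*N+2)" for x :: real
  have "Q = (\<lambda>x. (2 * (x / sin x) + x * cos x / sin x
     - (3 + (\<Sum>j=2..N. (2 ^ (2*j) - 4) * \<bar>bernoulli_num (2*j)\<bar> / fact (2*j) * x ^ (2*j))))
     / x^(2*N+2))"
    by (simp add: Q_def sin_tan_remainder_def tan_def fun_eq_iff)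
  hence "isCont Q (pi/2)" by (auto intro!: continuous_intros)
  hence "(Q \<longlongrightarrow> Q (pi/2)) (at_left (pi/2))"
    by (simp add: isCont_def filterlim_at_split)
  moreover have "eventually (\<lambda>x. x \<in> {0<..<pi/2}) (at_left (pi/2))"
    by (rule eventually_at_left_real) simp
  hence "eventually (\<lambda>x. Q x \<le> c) (at_left (pi/2))"
  proof eventually_elim
    case (elim x)
    hence x: "0 < \<bar>x\<bar>" "\<bar>x\<bar> < pi/2" by auto
    with c have "sin_tan_remainder N x < c * x^(2*N+2)" by blast
    thus "Q x \<le> c"
      using sin_tan_remainder_over_power(2)[OF N x] by (simp add: Q_def divide_le_eq)
  qed
  ultimately have "Q (pi/2) \<le> c" by (intro tendsto_upperbound) auto
  moreover have "Q (pi/2) = tail_coeff N (1/4)"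
    using sin_tan_remainder_eq_tail_coeff[OF N, of "pi/2"] by (simp add: Q_def power2_eq_square)
  ultimately show ?thesis by simp
qed

theorem theorem9:
  fixes N :: nat
  assumes "N \<ge> 1"
  defines "F \<equiv> (\<lambda>x::real. 2 * (x / sin x) + x / tan x
             - (3 + (\<Sum>j=2..N. (2 ^ (2*j) - 4) * \<bar>bernoulli_num (2*j)\<bar> / fact (2*j) * x ^ (2*j))))"
    and "a \<equiv> (2 ^ (2*N+2) - 4) * \<bar>bernoulli_num (2*N+2)\<bar> / fact (2*N+2)"
    and "b \<equiv> 8 / pi ^ (2*N+2) *
             ((\<Sum>k. (-1) ^ (k+2) / (real (k+1) ^ (2*N) * (2 * real (k+1) - 1)))
              - (\<Sum>k. (-1) ^ (k+2) / (real (k+1) ^ (2*N) * (2 * real (k+1) + 1))))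
           - 4 / pi ^ (2*N+2) *
             ((\<Sum>k. 1 / (real (k+1) ^ (2*N) * (2 * real (k+1) - 1)))
              - (\<Sum>k. 1 / (real (k+1) ^ (2*N) * (2 * real (k+1) + 1))))"
  shows "(\<forall>x::real. 0 < \<bar>x\<bar> \<and> \<bar>x\<bar> < pi / 2 \<longrightarrow>
            a * x ^ (2*N+2) < F x \<and> F x < b * x ^ (2*N+2))
       \<and> (\<forall>c::real. (\<forall>x::real. 0 < \<bar>x\<bar> \<and> \<bar>x\<bar> < pi / 2 \<longrightarrow> c * x ^ (2*N+2) < F x) \<longrightarrow> c \<le> a)
       \<and> (\<forall>c::real. (\<forall>x::real. 0 < \<bar>x\<bar> \<and> \<bar>x\<bar> < pi / 2 \<longrightarrow> F x < c * x ^ (2*N+2)) \<longrightarrow> b \<le> c)"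
proof -
  have "F = sin_tan_remainder N"
    by (simp add: F_def sin_tan_remainder_def fun_eq_iff)
  moreover have "a = tail_coeff N 0"
    unfolding a_def using tail_coeff_zero_eq[OF assms(1)] by simp
  moreover have "b = tail_coeff N (1/4)"
    unfolding b_def using tail_coeff_quarter_eq[OF assms(1)] by simp
  ultimately show ?thesis
    using sin_tan_remainder_bounds[OF assms(1)]
      sin_tan_remainder_lower_constant_sharp[OF assms(1)]
      sin_tan_remainder_upper_constant_sharp[OF assms(1)]
    by blast
qed

end
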